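(* Let $\{X_t\}_{t\in\mathbb{Z}}$ be a zero-mean strictly stationary real-valued process whose joint cumulants satisfy $\mathrm{cum}(X_{t+u_1},\dots,X_{t+u_k})=\mathrm{cum}(X_{u_1},\dots,X_{u_k})$ for all $k>0$, $u_1,\dots,u_k,t\in\mathbb{Z}$, and such that for every $k\geq 2$, $\sum_{u_1,\dots,u_{k-1}=-\infty}^\infty |c_k(u_1,\dots,u_{k-1})|<\infty$, where $c_k(u_1,\dots,u_{k-1})=\mathrm{cum}(X_{u_1},\dots,X_{u_{k-1}},X_0)$. Let $(\lambda_t)_{t\geq1}$ be forgetting factors in $(0,1]$, with taper, tapered Fourier transform $J_T(f;\boldsymbol{\lambda}_{T-1})$ and Fourier moments $H^{(T)}_k$ as in the context. Then for every $k\geq 2$ and frequencies $f_1,\dots,f_k$, as $T\to\infty$, $$\mathrm{cum}\{J_T(f_1;\boldsymbol{\lambda}_{T-1}),\dots,J_T(f_k;\boldsymbol{\lambda}_{T-1})\}=(2\pi)^{k-1}H^{(T)}_k\Big(\sum_{j=1}^k f_j\Big)\mathcal{C}_k(f_1,\dots,f_{k-1})+o(T).$$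
   Context: Forgetting factors are scalars in $(0,1]$. Given $\boldsymbol{\lambda}_{T-1}=(\lambda_1,\dots,\lambda_{T-1})$, the taper is $h_T(t)=1$ if $t=T$, $h_T(t)=\prod_{s=t}^{T-1}\lambda_s$ for $t=1,\dots,T-1$, and $h_T(t)=0$ otherwise. $J_T(f;\boldsymbol{\lambda}_{T-1})=\sum_{t=1}^T h_T(t)X_te^{-i2\pi ft}$, $H^{(T)}_k(f)=\sum_{t=1}^T[h_T(t)]^ke^{-i2\pi ft}$. The $k$-th order cumulant spectrum is $\mathcal{C}_k(f_1,\dots,f_{k-1})=(2\pi)^{-k+1}\sum_{u_1,\dots,u_{k-1}=-\infty}^{\infty}c_k(u_1,\dots,u_{k-1})\exp\{-i2\pi\sum_{j=1}^{k-1}u_jf_j\}$. Cumulants of complex random variables are multilinear (unconjugated). *)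

theory Defs
  imports "HOL-Probability.Probability" "HOL-Library.Landau_Symbols" "HOL-Library.Disjoint_Sets"
begin

text \<open>Joint cumulant of a finite list of complex random variables, defined by the
  moment-cumulant (Leonov-Shiryaev) partition formula; it is multilinear and unconjugated.\<close>
definition cum :: "'a measure \<Rightarrow> ('a \<Rightarrow> complex) list \<Rightarrow> complex" where
  "cum M Ys = (\<Sum>P\<in>{P. partition_on {..<length Ys} P}.
      (-1) ^ (card P - 1) * of_nat (fact (card P - 1)) *
      (\<Prod>B\<in>P. integral\<^sup>L M (\<lambda>\<omega>. \<Prod>i\<in>B. (Ys ! i) \<omega>)))"

definition cumfun :: "'a measure \<Rightarrow> (int \<Rightarrow> 'a \<Rightarrow> real) \<Rightarrow> int list \<Rightarrow> complex" where
  "cumfun M X us = cum M (map (\<lambda>u \<omega>. complex_of_real (X u \<omega>)) (us @ [0]))"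

definition cum_spectrum :: "'a measure \<Rightarrow> (int \<Rightarrow> 'a \<Rightarrow> real) \<Rightarrow> nat \<Rightarrow> real list \<Rightarrow> complex" where
  "cum_spectrum M X k fs =
     complex_of_real ((2 * pi) powi (- int k + 1)) *
     infsum (\<lambda>us. cumfun M X us *
        exp (- \<i> * complex_of_real (2 * pi * (\<Sum>j<k - 1. real_of_int (us ! j) * fs ! j))))
       {us. length us = k - 1}"

definition taper :: "(nat \<Rightarrow> real) \<Rightarrow> nat \<Rightarrow> int \<Rightarrow> real" where
  "taper lam T t = (if t = int T then 1
     else if 1 \<le> t \<and> t \<le> int T - 1 then (\<Prod>s\<in>{nat t..T - 1}. lam s) else 0)"

definition tapered_ft :: "(nat \<Rightarrow> real) \<Rightarrow> (int \<Rightarrow> 'a \<Rightarrow> real) \<Rightarrow> nat \<Rightarrow> real \<Rightarrow> 'a \<Rightarrow> complex" where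
  "tapered_ft lam X T f \<omega> = (\<Sum>t=1..T. complex_of_real (taper lam T (int t) * X (int t) \<omega>) *
       exp (- \<i> * complex_of_real (2 * pi * f * real t)))"

definition fourier_moment :: "(nat \<Rightarrow> real) \<Rightarrow> nat \<Rightarrow> nat \<Rightarrow> real \<Rightarrow> complex" where
  "fourier_moment lam T k f = (\<Sum>t=1..T. complex_of_real ((taper lam T (int t)) ^ k) *
       exp (- \<i> * complex_of_real (2 * pi * f * real t)))"

end

(*
  Multilinearity expands cum(J_T(f_1), ..., J_T(f_k)) into a sum over time tuples
  (t_1, ..., t_k) of tapered phases times cum(X_{t_1}, ..., X_{t_k}), and by stationarity the
  latter is c_k(t_1 - t_k, ..., t_{k-1} - t_k). Regrouping by these lags u gives

    sum_u c_k(u) exp(-i 2 pi sum_j u_j f_j) * sum_t h_T(t) prod_j h_T(t + u_j) exp(-i 2 pi (sum f) t),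

  and the inner sum differs from H_k(sum f) by at most 2 sum_j |u_j|, because the taper is
  nondecreasing on (-inf, T] with values in [0, 1], and by at most 2 T in any case.
  Absolute summability of c_k turns these two bounds into an o(T) error.
*)

theory Submission
  imports Defs
begin

section \<open>Multilinearity of joint cumulants\<close>

lemma sum_PiE_Un_disjoint:
  assumes "B \<inter> C = {}"
  shows "(\<Sum>g\<in>PiE (B \<union> C) (\<lambda>_. A). F (restrict g B) (restrict g C))
       = (\<Sum>gg\<in>PiE B (\<lambda>_. A) \<times> PiE C (\<lambda>_. A). F (fst gg) (snd gg))"
proof (rule sum.reindex_bij_witness[where i = "\<lambda>gg x. if x \<in> B then fst gg x else snd gg x"
      and j = "\<lambda>g. (restrict g B, restrict g C)"])
  fix gg assume gg: "gg \<in> PiE B (\<lambda>_. A) \<times> PiE C (\<lambda>_. A)"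
  have "restrict (\<lambda>x. if x \<in> B then fst gg x else snd gg x) B = fst gg"
    and "restrict (\<lambda>x. if x \<in> B then fst gg x else snd gg x) C = snd gg"
    using gg assms by (auto simp: fun_eq_iff PiE_def extensional_def)
  then show "(restrict (\<lambda>x. if x \<in> B then fst gg x else snd gg x) B,
      restrict (\<lambda>x. if x \<in> B then fst gg x else snd gg x) C) = gg"
    by simp
  show "(\<lambda>x. if x \<in> B then fst gg x else snd gg x) \<in> PiE (B \<union> C) (\<lambda>_. A)"
    using gg by (auto simp: PiE_def extensional_def Pi_def)
qed (auto simp: PiE_def extensional_def fun_eq_iff)

lemma prod_sum_PiE_Union_disjoint:
  fixes \<phi> :: "'i set \<Rightarrow> ('i \<Rightarrow> 'b) \<Rightarrow> 'c::comm_semiring_1"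
  assumes "finite P" "\<And>B. B \<in> P \<Longrightarrow> finite B" "disjoint P" "finite A"
  shows "(\<Prod>B\<in>P. \<Sum>g\<in>PiE B (\<lambda>_. A). \<phi> B g)
       = (\<Sum>g\<in>PiE (\<Union>P) (\<lambda>_. A). \<Prod>B\<in>P. \<phi> B (restrict g B))"
  using assms
proof (induction P rule: finite_induct)
  case empty
  then show ?case by simp
next
  case (insert B P)
  have disj: "B \<inter> \<Union>P = {}"
    using insert.prems(2) insert.hyps(2) by (auto simp: pairwise_def disjnt_def)
  have IH: "(\<Prod>B\<in>P. \<Sum>g\<in>PiE B (\<lambda>_. A). \<phi> B g)
       = (\<Sum>g\<in>PiE (\<Union>P) (\<lambda>_. A). \<Prod>B\<in>P. \<phi> B (restrict g B))"
    using insert.prems by (intro insert.IH) (auto simp: pairwise_def)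
  have "(\<Prod>B\<in>insert B P. \<Sum>g\<in>PiE B (\<lambda>_. A). \<phi> B g)
     = (\<Sum>gg\<in>PiE B (\<lambda>_. A) \<times> PiE (\<Union>P) (\<lambda>_. A).
        \<phi> B (fst gg) * (\<Prod>B'\<in>P. \<phi> B' (restrict (snd gg) B')))"
    using insert.hyps IH by (simp add: sum_product sum.cartesian_product case_prod_beta)
  also have "\<dots> = (\<Sum>g\<in>PiE (B \<union> \<Union>P) (\<lambda>_. A).
        \<phi> B (restrict g B) * (\<Prod>B'\<in>P. \<phi> B' (restrict (restrict g (\<Union>P)) B')))"
    using sum_PiE_Un_disjoint[OF disj,
        where F = "\<lambda>g1 g2. \<phi> B g1 * (\<Prod>B'\<in>P. \<phi> B' (restrict g2 B'))"]
    by simp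
  also have "\<dots> = (\<Sum>g\<in>PiE (\<Union>(insert B P)) (\<lambda>_. A). \<Prod>B\<in>insert B P. \<phi> B (restrict g B))"
    using insert.hyps by (auto intro!: sum.cong prod.cong simp: Int_absorb1 Union_upper)
  finally show ?case .
qed

lemma cum_map_upt:
  "cum M (map Y [0..<k]) =
     (\<Sum>P\<in>{P. partition_on {..<k} P}. (-1) ^ (card P - 1) * of_nat (fact (card P - 1)) *
        (\<Prod>B\<in>P. integral\<^sup>L M (\<lambda>\<omega>. \<Prod>i\<in>B. Y i \<omega>)))"
  unfolding cum_def length_map length_upt diff_zero
proof (intro sum.cong refl arg_cong2[where f = "(*)"] prod.cong Bochner_Integration.integral_cong)
  fix P B i \<omega> assume "P \<in> {P. partition_on {..<k} P}" "B \<in> P" "i \<in> B"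
  then have "i < k" by (auto dest: partition_onD1)
  then show "(map Y [0..<k] ! i) \<omega> = Y i \<omega>" by simp
qed

lemma integral_prod_sum_expand:
  fixes Z :: "'t \<Rightarrow> 'a \<Rightarrow> complex" and c :: "'i \<Rightarrow> 't \<Rightarrow> complex"
  assumes "finite A" "finite B"
    and prod_integrable: "\<And>g. integrable M (\<lambda>\<omega>. \<Prod>i\<in>B. Z (g i) \<omega>)"
  shows "integral\<^sup>L M (\<lambda>\<omega>. \<Prod>i\<in>B. \<Sum>t\<in>A. c i t * Z t \<omega>)
       = (\<Sum>g\<in>PiE B (\<lambda>_. A). (\<Prod>i\<in>B. c i (g i)) * integral\<^sup>L M (\<lambda>\<omega>. \<Prod>i\<in>B. Z (g i) \<omega>))"
proof -
  have "(\<lambda>\<omega>. \<Prod>i\<in>B. \<Sum>t\<in>A. c i t * Z t \<omega>)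
      = (\<lambda>\<omega>. \<Sum>g\<in>PiE B (\<lambda>_. A). (\<Prod>i\<in>B. c i (g i)) * (\<Prod>i\<in>B. Z (g i) \<omega>))"
    using assms(1,2) by (simp add: prod_sum_PiE prod.distrib)
  then show ?thesis
    using prod_integrable by simp
qed

lemma prod_integral_sum_expand_partition:
  fixes Z :: "'t \<Rightarrow> 'a \<Rightarrow> complex" and c :: "'i \<Rightarrow> 't \<Rightarrow> complex"
  assumes P: "partition_on I P" and "finite I" "finite A"
    and prod_integrable: "\<And>B (g :: 'i \<Rightarrow> 't). finite B \<Longrightarrow> integrable M (\<lambda>\<omega>. \<Prod>i\<in>B. Z (g i) \<omega>)"
  shows "(\<Prod>B\<in>P. integral\<^sup>L M (\<lambda>\<omega>. \<Prod>i\<in>B. \<Sum>t\<in>A. c i t * Z t \<omega>))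
       = (\<Sum>g\<in>PiE I (\<lambda>_. A). (\<Prod>i\<in>I. c i (g i)) * (\<Prod>B\<in>P. integral\<^sup>L M (\<lambda>\<omega>. \<Prod>i\<in>B. Z (g i) \<omega>)))"
proof -
  have fin_P: "finite P" using assms finite_elements by blast
  have fin_B: "finite B" if "B \<in> P" for B
    using assms that by (metis Union_upper finite_subset partition_onD1)
  have disj: "disjoint P" and Un: "\<Union>P = I" using P by (auto simp: partition_on_def)
  have "(\<Prod>B\<in>P. integral\<^sup>L M (\<lambda>\<omega>. \<Prod>i\<in>B. \<Sum>t\<in>A. c i t * Z t \<omega>))
      = (\<Prod>B\<in>P. \<Sum>g\<in>PiE B (\<lambda>_. A). (\<Prod>i\<in>B. c i (g i)) * integral\<^sup>L M (\<lambda>\<omega>. \<Prod>i\<in>B. Z (g i) \<omega>))"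
    by (intro prod.cong refl integral_prod_sum_expand assms(3) fin_B prod_integrable)
  also have "\<dots> = (\<Sum>g\<in>PiE I (\<lambda>_. A). \<Prod>B\<in>P. (\<Prod>i\<in>B. c i (g i))
                    * integral\<^sup>L M (\<lambda>\<omega>. \<Prod>i\<in>B. Z (g i) \<omega>))"
    using prod_sum_PiE_Union_disjoint[OF fin_P fin_B disj assms(3), where \<phi> =
        "\<lambda>B g. (\<Prod>i\<in>B. c i (g i)) * integral\<^sup>L M (\<lambda>\<omega>. \<Prod>i\<in>B. Z (g i) \<omega>)"] Un
    by simp
  also have "\<dots> = (\<Sum>g\<in>PiE I (\<lambda>_. A). (\<Prod>i\<in>I. c i (g i))
                    * (\<Prod>B\<in>P. integral\<^sup>L M (\<lambda>\<omega>. \<Prod>i\<in>B. Z (g i) \<omega>)))"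
  proof (rule sum.cong[OF refl])
    fix g :: "'i \<Rightarrow> 't"
    have "(\<Prod>B\<in>P. \<Prod>i\<in>B. c i (g i)) = (\<Prod>i\<in>I. c i (g i))"
      using fin_B disj by (subst Un[symmetric], subst prod.Union_disjoint)
        (auto simp: pairwise_def disjnt_def)
    then show "(\<Prod>B\<in>P. (\<Prod>i\<in>B. c i (g i)) * integral\<^sup>L M (\<lambda>\<omega>. \<Prod>i\<in>B. Z (g i) \<omega>))
        = (\<Prod>i\<in>I. c i (g i)) * (\<Prod>B\<in>P. integral\<^sup>L M (\<lambda>\<omega>. \<Prod>i\<in>B. Z (g i) \<omega>))"
      by (simp add: prod.distrib)
  qed
  finally show ?thesis .
qed

lemma cum_multilinear:
  fixes Z :: "'t \<Rightarrow> 'a \<Rightarrow> complex" and c :: "nat \<Rightarrow> 't \<Rightarrow> complex"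
  assumes "finite A"
    and prod_integrable: "\<And>B (g :: nat \<Rightarrow> 't). finite B \<Longrightarrow> integrable M (\<lambda>\<omega>. \<Prod>i\<in>B. Z (g i) \<omega>)"
  shows "cum M (map (\<lambda>i \<omega>. \<Sum>t\<in>A. c i t * Z t \<omega>) [0..<k])
       = (\<Sum>g\<in>PiE {..<k} (\<lambda>_. A). (\<Prod>i<k. c i (g i)) * cum M (map (\<lambda>i. Z (g i)) [0..<k]))"
proof -
  have "cum M (map (\<lambda>i \<omega>. \<Sum>t\<in>A. c i t * Z t \<omega>) [0..<k])
      = (\<Sum>P\<in>{P. partition_on {..<k} P}. (-1) ^ (card P - 1) * of_nat (fact (card P - 1)) *
          (\<Sum>g\<in>PiE {..<k} (\<lambda>_. A). (\<Prod>i<k. c i (g i))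
             * (\<Prod>B\<in>P. integral\<^sup>L M (\<lambda>\<omega>. \<Prod>i\<in>B. Z (g i) \<omega>))))"
    unfolding cum_map_upt using assms
    by (intro sum.cong refl arg_cong2[where f = "(*)"] prod_integral_sum_expand_partition) auto
  also have "\<dots> = (\<Sum>g\<in>PiE {..<k} (\<lambda>_. A). (\<Prod>i<k. c i (g i)) * cum M (map (\<lambda>i. Z (g i)) [0..<k]))"
    unfolding cum_map_upt sum_distrib_left by (subst sum.swap) (simp add: mult_ac)
  finally show ?thesis .
qed

section \<open>The taper\<close>

lemma taper_nonneg:
  assumes "\<And>s. 1 \<le> s \<Longrightarrow> 0 \<le> lam s"
  shows "0 \<le> taper lam T t"
  using assms unfolding taper_def by (auto intro!: prod_nonneg)

lemma taper_le_one:
  assumes "\<And>s. 1 \<le> s \<Longrightarrow> 0 \<le> lam s \<and> lam s \<le> 1"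
  shows "taper lam T t \<le> 1"
  using assms unfolding taper_def by (auto intro!: prod_le_1)

lemma taper_eq_0:
  assumes "T \<ge> 1" and "t < 1 \<or> int T < t"
  shows "taper lam T t = 0"
  using assms unfolding taper_def by auto

lemma taper_mono:
  assumes lam: "\<And>s. 1 \<le> s \<Longrightarrow> 0 \<le> lam s \<and> lam s \<le> 1"
    and "T \<ge> 1" "t \<le> t'" "t' \<le> int T"
  shows "taper lam T t \<le> taper lam T t'"
proof -
  consider "t < 1" | "t' = int T" | "1 \<le> t" "t' \<le> int T - 1"
    using assms by linarith
  then show ?thesis
  proof cases
    case 1
    then show ?thesis using assms lam by (simp add: taper_eq_0 taper_nonneg)
  next
    case 2
    then show ?thesis using lam taper_le_one by (simp add: taper_def)
  next
    case 3
    have split: "{nat t..T-1} = {nat t..<nat t'} \<union> {nat t'..T-1}"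
      using 3 assms by auto
    have "(\<Prod>s\<in>{nat t..T-1}. lam s) = (\<Prod>s\<in>{nat t..<nat t'}. lam s) * (\<Prod>s\<in>{nat t'..T-1}. lam s)"
      unfolding split by (rule prod.union_disjoint) auto
    also have "\<dots> \<le> (\<Prod>s\<in>{nat t'..T-1}. lam s)"
      using 3 assms(3) lam by (intro mult_left_le_one_le prod_nonneg prod_le_1) auto
    finally show ?thesis
      using 3 assms by (simp add: taper_def)
  qed
qed

lemma sum_mono_shift_diff_le:
  fixes m :: "int \<Rightarrow> real"
  assumes "mono m" and "\<And>t. 0 \<le> m t \<and> m t \<le> 1"
  shows "(\<Sum>i<n. m (a + int i + int u) - m (a + int i)) \<le> real u"
proof -
  have "(\<Sum>i<n. m (a + int i + int u) - m (a + int i))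
      = (\<Sum>i<n. \<Sum>j<u. m (a + int i + int (Suc j)) - m (a + int i + int j))"
    using sum_lessThan_telescope[of "\<lambda>j. m (a + int _ + int j)" u] by simp
  also have "\<dots> = (\<Sum>j<u. \<Sum>i<n. m (a + int j + int (Suc i)) - m (a + int j + int i))"
    by (subst sum.swap) (simp add: algebra_simps)
  also have "\<dots> = (\<Sum>j<u. m (a + int j + int n) - m (a + int j))"
    using sum_lessThan_telescope[of "\<lambda>i. m (a + int _ + int i)" n] by simp
  also have "\<dots> \<le> (\<Sum>j<u. 1)"
    using assms(2) by (intro sum_mono) (smt (verit))
  finally show ?thesis by simp
qed

lemma sum_abs_mono_shift_diff_le:
  fixes m :: "int \<Rightarrow> real"
  assumes mono: "mono m" and bounds: "\<And>t. 0 \<le> m t \<and> m t \<le> 1"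
  shows "(\<Sum>i<n. \<bar>m (a + int i + u) - m (a + int i)\<bar>) \<le> real_of_int \<bar>u\<bar>"
proof (cases "u \<ge> 0")
  case True
  have "(\<Sum>i<n. \<bar>m (a + int i + u) - m (a + int i)\<bar>)
      = (\<Sum>i<n. m (a + int i + int (nat u)) - m (a + int i))"
    using True mono by (intro sum.cong) (auto simp: mono_def)
  also have "\<dots> \<le> real (nat u)"
    by (rule sum_mono_shift_diff_le[OF mono bounds])
  finally show ?thesis using True by simp
next
  case False
  have "(\<Sum>i<n. \<bar>m (a + int i + u) - m (a + int i)\<bar>)
      = (\<Sum>i<n. m ((a + u) + int i + int (nat (-u))) - m ((a + u) + int i))"
    using False mono by (intro sum.cong) (auto simp: mono_def algebra_simps)
  also have "\<dots> \<le> real (nat (-u))"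
    by (rule sum_mono_shift_diff_le[OF mono bounds])
  finally show ?thesis using False by simp
qed

lemma sum_abs_taper_shift_diff_le:
  assumes lam: "\<And>s. 1 \<le> s \<Longrightarrow> 0 \<le> lam s \<and> lam s \<le> 1" and T: "T \<ge> 1"
  shows "(\<Sum>t=1..T. \<bar>taper lam T (int t + u) - taper lam T (int t)\<bar>) \<le> 2 * real_of_int \<bar>u\<bar>"
proof -
  define h where "h = taper lam T"
  \<comment> \<open>\<open>h\<close> is the difference of the nondecreasing \<open>[0,1]\<close>-valued functions \<open>g\<close> and \<open>jump\<close>.\<close>
  define jump :: "int \<Rightarrow> real" where "jump t = (if t > int T then 1 else 0)" for t
  define g where "g t = h t + jump t" for t
  have h_0: "h t = 0" if "t > int T" for t
    using T that by (simp add: h_def taper_eq_0)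
  have h_01: "0 \<le> h t \<and> h t \<le> 1" for t
    using lam by (simp add: h_def taper_nonneg taper_le_one)
  have "mono g"
    using lam T h_0 h_01 by (auto simp: mono_def g_def jump_def h_def intro: taper_mono)
  moreover have "0 \<le> g t \<and> g t \<le> 1" for t
    using h_0 h_01 by (auto simp: g_def jump_def)
  moreover have "mono jump" "0 \<le> jump t \<and> jump t \<le> 1" for t
    by (auto simp: mono_def jump_def)
  ultimately have variation: "(\<Sum>i<T. \<bar>g (1 + int i + u) - g (1 + int i)\<bar>) \<le> real_of_int \<bar>u\<bar>"
      "(\<Sum>i<T. \<bar>jump (1 + int i + u) - jump (1 + int i)\<bar>) \<le> real_of_int \<bar>u\<bar>"
    by (blast intro: sum_abs_mono_shift_diff_le)+
  have "(\<Sum>t=1..T. \<bar>h (int t + u) - h (int t)\<bar>) = (\<Sum>i<T. \<bar>h (1 + int i + u) - h (1 + int i)\<bar>)"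
    by (simp add: sum.atLeast1_atMost_eq add_ac)
  also have "\<dots> \<le> (\<Sum>i<T. \<bar>g (1 + int i + u) - g (1 + int i)\<bar>
      + \<bar>jump (1 + int i + u) - jump (1 + int i)\<bar>)"
    by (intro sum_mono) (simp add: g_def)
  also have "\<dots> \<le> 2 * real_of_int \<bar>u\<bar>"
    using variation by (simp add: sum.distrib)
  finally show ?thesis unfolding h_def .
qed

definition fourier_exp :: "real \<Rightarrow> complex" where
  "fourier_exp r = exp (- \<i> * complex_of_real (2 * pi * r))"

lemma fourier_exp_add: "fourier_exp (a + b) = fourier_exp a * fourier_exp b"
  unfolding fourier_exp_def by (simp add: ring_distribs exp_add[symmetric])

lemma fourier_exp_sum: "fourier_exp (\<Sum>j\<in>A. f j) = (\<Prod>j\<in>A. fourier_exp (f j))"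
  by (induction A rule: infinite_finite_induct) (auto simp: fourier_exp_add, simp_all add: fourier_exp_def)

lemma norm_fourier_exp [simp]: "norm (fourier_exp r) = 1"
  unfolding fourier_exp_def by (simp add: norm_exp)

lemma norm_of_real_mult_fourier_exp [simp]:
  "norm (complex_of_real x * fourier_exp r) = \<bar>x\<bar>"
  by (simp only: norm_mult norm_of_real norm_fourier_exp mult_1_right)

definition lagged_fourier_moment :: "(nat \<Rightarrow> real) \<Rightarrow> nat \<Rightarrow> real \<Rightarrow> int list \<Rightarrow> complex" where
  "lagged_fourier_moment lam T f us = (\<Sum>t=1..T.
      complex_of_real (taper lam T (int t) * (\<Prod>j<length us. taper lam T (int t + us ! j)))
      * fourier_exp (f * real t))"

lemma fourier_moment_eq_lagged_zero:
  "fourier_moment lam T (Suc K) f = lagged_fourier_moment lam T f (replicate K 0)"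
  unfolding fourier_moment_def lagged_fourier_moment_def fourier_exp_def
  by (simp add: mult_ac)

lemma norm_lagged_fourier_moment_le:
  assumes lam: "\<And>s. 1 \<le> s \<Longrightarrow> 0 \<le> lam s \<and> lam s \<le> 1"
  shows "norm (lagged_fourier_moment lam T f us) \<le> real T"
proof -
  have "norm (lagged_fourier_moment lam T f us)
      \<le> (\<Sum>t=1..T. \<bar>taper lam T (int t) * (\<Prod>j<length us. taper lam T (int t + us ! j))\<bar>)"
    unfolding lagged_fourier_moment_def
    by (rule order_trans[OF norm_sum]) (simp only: norm_of_real_mult_fourier_exp order_refl)
  also have "\<dots> \<le> (\<Sum>t=1..T. 1)"
    using lam by (intro sum_mono)
      (simp add: abs_mult taper_nonneg taper_le_one prod_nonneg prod_le_1 mult_le_one)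
  finally show ?thesis by simp
qed

lemma norm_lagged_fourier_moment_diff_le_linear:
  assumes lam: "\<And>s. 1 \<le> s \<Longrightarrow> 0 \<le> lam s \<and> lam s \<le> 1"
  shows "norm (lagged_fourier_moment lam T f us - fourier_moment lam T (Suc K) f) \<le> 2 * real T"
proof -
  have "norm (lagged_fourier_moment lam T f us - fourier_moment lam T (Suc K) f)
      \<le> norm (lagged_fourier_moment lam T f us) + norm (lagged_fourier_moment lam T f (replicate K 0))"
    unfolding fourier_moment_eq_lagged_zero by (rule norm_triangle_ineq4)
  then show ?thesis
    using norm_lagged_fourier_moment_le[where lam = lam and T = T and f = f and us = us, OF lam]
      norm_lagged_fourier_moment_le[where lam = lam and T = T and f = f and us = "replicate K 0",
        OF lam]
    by linarith
qed

lemma norm_lagged_fourier_moment_diff_le: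
  assumes lam: "\<And>s. 1 \<le> s \<Longrightarrow> 0 \<le> lam s \<and> lam s \<le> 1" and T: "T \<ge> 1"
  shows "norm (lagged_fourier_moment lam T f us - fourier_moment lam T (Suc (length us)) f)
    \<le> 2 * (\<Sum>j<length us. real_of_int \<bar>us ! j\<bar>)"
proof -
  define h where "h = taper lam T"
  define K where "K = length us"
  have h_01: "0 \<le> h t \<and> h t \<le> 1" for t
    using lam by (simp add: h_def taper_nonneg taper_le_one)
  have "lagged_fourier_moment lam T f us - fourier_moment lam T (Suc K) f
      = (\<Sum>t=1..T. complex_of_real (h (int t) *
          ((\<Prod>j<K. h (int t + us ! j)) - (\<Prod>j<K. h (int t)))) * fourier_exp (f * real t))"
    unfolding fourier_moment_eq_lagged_zero lagged_fourier_moment_def h_def K_def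
    by (simp add: sum_subtractf[symmetric] ring_distribs)
  also have "norm \<dots> \<le> (\<Sum>t=1..T. \<bar>(\<Prod>j<K. h (int t + us ! j)) - (\<Prod>j<K. h (int t))\<bar>)"
  proof (rule order_trans[OF norm_sum], rule sum_mono)
    fix t
    have "\<bar>h (int t) * ((\<Prod>j<K. h (int t + us ! j)) - (\<Prod>j<K. h (int t)))\<bar>
        \<le> \<bar>(\<Prod>j<K. h (int t + us ! j)) - (\<Prod>j<K. h (int t))\<bar>"
      unfolding abs_mult using h_01 by (intro mult_left_le_one_le) auto
    then show "norm (complex_of_real (h (int t) * ((\<Prod>j<K. h (int t + us ! j)) - (\<Prod>j<K. h (int t))))
        * fourier_exp (f * real t)) \<le> \<bar>(\<Prod>j<K. h (int t + us ! j)) - (\<Prod>j<K. h (int t))\<bar>"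
      by (simp only: norm_of_real_mult_fourier_exp)
  qed
  also have "\<dots> \<le> (\<Sum>t=1..T. \<Sum>j<K. \<bar>h (int t + us ! j) - h (int t)\<bar>)"
  proof (rule sum_mono)
    fix t
    show "\<bar>(\<Prod>j<K. h (int t + us ! j)) - (\<Prod>j<K. h (int t))\<bar> \<le> (\<Sum>j<K. \<bar>h (int t + us ! j) - h (int t)\<bar>)"
      using norm_prod_diff[of "{..<K}" "\<lambda>j. h (int t + us ! j)" "\<lambda>_. h (int t)"] h_01 by simp
  qed
  also have "\<dots> = (\<Sum>j<K. \<Sum>t=1..T. \<bar>h (int t + us ! j) - h (int t)\<bar>)"
    by (rule sum.swap)
  also have "\<dots> \<le> (\<Sum>j<K. 2 * real_of_int \<bar>us ! j\<bar>)"
    unfolding h_def by (intro sum_mono sum_abs_taper_shift_diff_le lam T)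
  finally show ?thesis by (simp add: K_def sum_distrib_left)
qed

definition lag_offsets :: "nat \<Rightarrow> (nat \<Rightarrow> nat) \<Rightarrow> int list" where
  "lag_offsets K g = map (\<lambda>j. int (g j) - int (g K)) [0..<K]"

lemma length_lag_offsets: "length (lag_offsets K g) = K"
  by (simp add: lag_offsets_def)

lemma inj_on_lag_offsets: "inj_on (\<lambda>g. (g K, lag_offsets K g)) (PiE {..<Suc K} A)"
proof (rule inj_onI)
  fix g g' assume g: "g \<in> PiE {..<Suc K} A" and g': "g' \<in> PiE {..<Suc K} A"
    and eq: "(g K, lag_offsets K g) = (g' K, lag_offsets K g')"
  have "g j = g' j" if "j < K" for j
    using eq arg_cong[where f = "\<lambda>us. us ! j", OF conjunct2[OF eq[unfolded prod.inject]]] that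
    by (simp add: lag_offsets_def)
  with eq show "g = g'"
    by (intro PiE_ext[OF g g']) (auto simp: less_Suc_eq)
qed

lemma lag_offsets_range:
  assumes g: "g \<in> PiE {..<Suc K} (\<lambda>_. {1..T})"
  shows "g K \<in> {1..T}" and "set (lag_offsets K g) \<subseteq> {-int T..int T}"
proof -
  have range: "1 \<le> g i \<and> g i \<le> T" if "i \<le> K" for i
    using PiE_mem[OF g, of i] that by simp
  then show "g K \<in> {1..T}" by simp
  show "set (lag_offsets K g) \<subseteq> {-int T..int T}"
  proof
    fix x assume "x \<in> set (lag_offsets K g)"
    then obtain j where "j < K" "x = int (g j) - int (g K)"
      by (auto simp: lag_offsets_def)
    with range[of j] range[of K] show "x \<in> {-int T..int T}"
      by auto
  qed
qed

lemma ex_PiE_lag_offsets: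
  assumes t: "t \<in> {1..T}" and us: "length us = K"
    and inside: "\<forall>j<K. int t + us ! j \<in> {1..int T}"
  shows "\<exists>g\<in>PiE {..<Suc K} (\<lambda>_. {1..T}). g K = t \<and> lag_offsets K g = us"
proof
  define g where "g i = (if i < K then nat (int t + us ! i) else if i = K then t else undefined)" for i
  show "g \<in> PiE {..<Suc K} (\<lambda>_. {1..T})"
  proof (rule PiE_I)
    show "g i \<in> {1..T}" if "i \<in> {..<Suc K}" for i
      using that t inside by (cases "i < K") (auto simp: g_def)
    show "g i = undefined" if "i \<notin> {..<Suc K}" for i
      using that by (simp add: g_def)
  qed
  have "lag_offsets K g = us"
    using us inside by (intro nth_equalityI) (auto simp: g_def lag_offsets_def)
  then show "g K = t \<and> lag_offsets K g = us"
    by (simp add: g_def)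
qed

lemma sum_PiE_lag_offsets:
  fixes F :: "nat \<Rightarrow> int list \<Rightarrow> 'b::comm_monoid_add"
  assumes vanish: "\<And>t us. t \<in> {1..T} \<Longrightarrow> length us = K \<Longrightarrow>
      \<exists>j<K. int t + us ! j \<notin> {1..int T} \<Longrightarrow> F t us = 0"
  shows "(\<Sum>g\<in>PiE {..<Suc K} (\<lambda>_. {1..T}). F (g K) (lag_offsets K g))
       = (\<Sum>us\<in>{us. set us \<subseteq> {-int T..int T} \<and> length us = K}. \<Sum>t=1..T. F t us)"
proof -
  define PE where "PE = PiE {..<Suc K} (\<lambda>_. {1..T})"
  define L where "L = {us. set us \<subseteq> {-int T..int T} \<and> length us = K}"
  define \<phi> where "\<phi> g = (g K, lag_offsets K g)" for g :: "nat \<Rightarrow> nat"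
  have "(\<Sum>g\<in>PE. F (g K) (lag_offsets K g)) = (\<Sum>p\<in>\<phi> ` PE. F (fst p) (snd p))"
    by (simp add: sum.reindex inj_on_lag_offsets PE_def \<phi>_def)
  also have "\<dots> = (\<Sum>p\<in>{1..T} \<times> L. F (fst p) (snd p))"
  proof (rule sum.mono_neutral_left)
    show "finite ({1..T} \<times> L)"
      unfolding L_def by (intro finite_cartesian_product finite_lists_length_eq) auto
    show "\<phi> ` PE \<subseteq> {1..T} \<times> L"
    proof
      fix p assume "p \<in> \<phi> ` PE"
      then obtain g where "g \<in> PE" "p = \<phi> g"
        by blast
      then show "p \<in> {1..T} \<times> L"
        using lag_offsets_range[of g K T] by (simp add: \<phi>_def PE_def L_def length_lag_offsets)
    qed
    show "\<forall>p\<in>{1..T} \<times> L - \<phi> ` PE. F (fst p) (snd p) = 0"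
    proof
      fix p assume p: "p \<in> {1..T} \<times> L - \<phi> ` PE"
      obtain t us where p_eq: "p = (t, us)"
        by (cases p)
      with p have t: "t \<in> {1..T}" and us: "length us = K" and outside: "(t, us) \<notin> \<phi> ` PE"
        by (auto simp: L_def)
      have "\<exists>j<K. int t + us ! j \<notin> {1..int T}"
      proof (rule ccontr)
        assume "\<not> (\<exists>j<K. int t + us ! j \<notin> {1..int T})"
        then obtain g where g: "g \<in> PE" and "g K = t" "lag_offsets K g = us"
          using ex_PiE_lag_offsets[OF t us] unfolding PE_def by blast
        then have "(t, us) = \<phi> g"
          by (simp add: \<phi>_def)
        with g outside show False
          by blast
      qed
      then show "F (fst p) (snd p) = 0"
        using vanish[OF t us] p_eq by simp
    qed
  qed
  also have "\<dots> = (\<Sum>t=1..T. \<Sum>us\<in>L. F t us)"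
    by (simp add: sum.cartesian_product case_prod_beta)
  also have "\<dots> = (\<Sum>us\<in>L. \<Sum>t=1..T. F t us)"
    by (rule sum.swap)
  finally show ?thesis by (simp add: PE_def L_def)
qed

lemma cum_lag_offsets:
  assumes cum_stat: "\<And>(us::int list) (t::int). us \<noteq> [] \<Longrightarrow>
      cum M (map (\<lambda>u \<omega>. complex_of_real (X (t + u) \<omega>)) us)
    = cum M (map (\<lambda>u \<omega>. complex_of_real (X u \<omega>)) us)"
  shows "cum M (map (\<lambda>i \<omega>. complex_of_real (X (int (g i)) \<omega>)) [0..<Suc K])
       = cumfun M X (lag_offsets K g)"
proof -
  have "cumfun M X (lag_offsets K g)
      = cum M (map (\<lambda>u \<omega>. complex_of_real (X (int (g K) + u) \<omega>)) (lag_offsets K g @ [0]))"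
    unfolding cumfun_def using cum_stat[of "lag_offsets K g @ [0]" "int (g K)"] by simp
  also have "map (\<lambda>u \<omega>. complex_of_real (X (int (g K) + u) \<omega>)) (lag_offsets K g @ [0])
      = map (\<lambda>i \<omega>. complex_of_real (X (int (g i)) \<omega>)) [0..<Suc K]"
    by (simp add: lag_offsets_def)
  finally show ?thesis by simp
qed

lemma tapered_weights_lag_offsets:
  fixes h :: "int \<Rightarrow> real"
  assumes "length fs = Suc K"
  shows "(\<Prod>i<Suc K. complex_of_real (h (int (g i))) * fourier_exp (fs ! i * real (g i)))
    = fourier_exp (\<Sum>j<K. real_of_int (lag_offsets K g ! j) * fs ! j)
      * (complex_of_real (h (int (g K)) * (\<Prod>j<K. h (int (g K) + lag_offsets K g ! j)))
         * fourier_exp (sum_list fs * real (g K)))"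
proof -
  have "sum_list fs = (\<Sum>j<K. fs ! j) + fs ! K"
    using assms by (simp add: sum_list_sum_nth atLeast0LessThan)
  then have phase: "(\<Sum>i<Suc K. fs ! i * real (g i))
      = (\<Sum>j<K. real_of_int (lag_offsets K g ! j) * fs ! j) + sum_list fs * real (g K)"
    by (simp add: lag_offsets_def algebra_simps sum_subtractf sum_distrib_left sum_distrib_right)
  have "(\<Prod>i<Suc K. h (int (g i))) = h (int (g K)) * (\<Prod>j<K. h (int (g K) + lag_offsets K g ! j))"
    by (simp add: lag_offsets_def)
  moreover have "(\<Prod>i<Suc K. complex_of_real (h (int (g i))) * fourier_exp (fs ! i * real (g i)))
      = complex_of_real (\<Prod>i<Suc K. h (int (g i))) * fourier_exp (\<Sum>i<Suc K. fs ! i * real (g i))"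
    by (simp only: prod.distrib fourier_exp_sum of_real_prod)
  ultimately show ?thesis
    by (simp only: phase fourier_exp_add mult_ac)
qed

section \<open>The lag expansion of the tapered cumulant\<close>

definition lag_weight :: "'a measure \<Rightarrow> (int \<Rightarrow> 'a \<Rightarrow> real) \<Rightarrow> real list \<Rightarrow> int list \<Rightarrow> complex" where
  "lag_weight M X fs us =
     cumfun M X us * fourier_exp (\<Sum>j<length us. real_of_int (us ! j) * fs ! j)"

lemma norm_lag_weight [simp]: "norm (lag_weight M X fs us) = norm (cumfun M X us)"
  by (simp add: lag_weight_def norm_mult)

lemma integrable_prod_of_real:
  assumes moments: "\<And>ts. integrable M (\<lambda>\<omega>. \<Prod>t\<leftarrow>ts. X t \<omega>)" and "finite B"
  shows "integrable M (\<lambda>\<omega>. \<Prod>i\<in>B. complex_of_real (X (u i) \<omega>))"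
proof -
  obtain xs where "set xs = B" "distinct xs"
    using finite_distinct_list[OF assms(2)] by blast
  then have eq: "(\<lambda>\<omega>. \<Prod>i\<in>B. complex_of_real (X (u i) \<omega>))
      = (\<lambda>\<omega>. complex_of_real (\<Prod>t\<leftarrow>map u xs. X t \<omega>))"
    by (auto simp: prod.distinct_set_conv_list comp_def simp flip: of_real_prod)
  show ?thesis
    unfolding eq by (rule integrable_of_real[OF moments])
qed

lemma tapered_ft_eq_sum:
  "tapered_ft lam X T f = (\<lambda>\<omega>. \<Sum>t\<in>{1..T}.
     (complex_of_real (taper lam T (int t)) * fourier_exp (f * real t)) * complex_of_real (X (int t) \<omega>))"
  by (simp add: tapered_ft_def fourier_exp_def fun_eq_iff mult_ac)

lemma sum_bounded_lists_eq_infsum: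
  fixes f :: "int list \<Rightarrow> 'b::{comm_monoid_add, t2_space}"
  assumes "\<And>us j. length us = K \<Longrightarrow> j < K \<Longrightarrow> us ! j \<notin> {-int T..int T} \<Longrightarrow> f us = 0"
  shows "(\<Sum>us\<in>{us. set us \<subseteq> {-int T..int T} \<and> length us = K}. f us)
       = (\<Sum>\<^sub>\<infinity>us\<in>{us. length us = K}. f us)"
proof -
  let ?L = "{us. set us \<subseteq> {-int T..int T} \<and> length us = K}"
  have "f us = 0" if "length us = K" and "us \<notin> ?L" for us
  proof -
    have "\<not> set us \<subseteq> {-int T..int T}"
      using that by simp
    then obtain x where "x \<in> set us" "x \<notin> {-int T..int T}"
      by blast
    then obtain j where "j < K" "us ! j \<notin> {-int T..int T}"
      using \<open>length us = K\<close> by (auto simp: in_set_conv_nth)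
    with \<open>length us = K\<close> show ?thesis
      by (rule assms)
  qed
  then have "(\<Sum>\<^sub>\<infinity>us\<in>?L. f us) = (\<Sum>\<^sub>\<infinity>us\<in>{us. length us = K}. f us)"
    by (intro infsum_cong_neutral) auto
  moreover have "finite ?L"
    by (rule finite_lists_length_eq) simp
  ultimately show ?thesis
    by simp
qed

lemma cum_tapered_ft_lag_expansion:
  assumes moments: "\<And>ts. integrable M (\<lambda>\<omega>. \<Prod>t\<leftarrow>ts. X t \<omega>)"
    and cum_stat: "\<And>(us::int list) (t::int). us \<noteq> [] \<Longrightarrow>
          cum M (map (\<lambda>u \<omega>. complex_of_real (X (t + u) \<omega>)) us)
        = cum M (map (\<lambda>u \<omega>. complex_of_real (X u \<omega>)) us)"
    and T: "T \<ge> 1" and len: "length fs = Suc K"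
  shows "cum M (map (\<lambda>f. tapered_ft lam X T f) fs)
    = (\<Sum>\<^sub>\<infinity>us\<in>{us. length us = K}.
        lag_weight M X fs us * lagged_fourier_moment lam T (sum_list fs) us)"
proof -
  define h where "h = taper lam T"
  define Z where "Z t = (\<lambda>\<omega>. complex_of_real (X (int t) \<omega>))" for t :: nat
  define F where "F t us = cumfun M X us * fourier_exp (\<Sum>j<K. real_of_int (us ! j) * fs ! j)
      * (complex_of_real (h (int t) * (\<Prod>j<K. h (int t + us ! j))) * fourier_exp (sum_list fs * real t))"
    for t us
  have vanish: "F t us = 0" if "\<exists>j<K. int t + us ! j \<notin> {1..int T}" for t us
    using that taper_eq_0[OF T] by (force simp: F_def h_def)
  have cum_Z: "cum M (map (\<lambda>i. Z (g i)) [0..<Suc K]) = cumfun M X (lag_offsets K g)" for g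
    using cum_lag_offsets[OF cum_stat, where g = g and K = K] by (simp add: Z_def del: upt_Suc)
  have map_eq: "map (\<lambda>f. tapered_ft lam X T f) fs
      = map (\<lambda>i \<omega>. \<Sum>t\<in>{1..T}.
          (complex_of_real (h (int t)) * fourier_exp (fs ! i * real t)) * Z t \<omega>) [0..<Suc K]"
    by (rule nth_equalityI) (simp_all add: len tapered_ft_eq_sum h_def Z_def del: upt_Suc)
  have "cum M (map (\<lambda>f. tapered_ft lam X T f) fs)
      = (\<Sum>g\<in>PiE {..<Suc K} (\<lambda>_. {1..T}).
          (\<Prod>i<Suc K. complex_of_real (h (int (g i))) * fourier_exp (fs ! i * real (g i)))
          * cum M (map (\<lambda>i. Z (g i)) [0..<Suc K]))"
    unfolding map_eq
    by (rule cum_multilinear[where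
          c = "\<lambda>i t. complex_of_real (h (int t)) * fourier_exp (fs ! i * real t)"])
      (auto simp: Z_def intro!: integrable_prod_of_real[where M = M and X = X, OF moments])
  also have "\<dots> = (\<Sum>g\<in>PiE {..<Suc K} (\<lambda>_. {1..T}). F (g K) (lag_offsets K g))"
    unfolding tapered_weights_lag_offsets[OF len] cum_Z F_def
    by (simp add: mult_ac)
  also have "\<dots> = (\<Sum>us\<in>{us. set us \<subseteq> {-int T..int T} \<and> length us = K}. \<Sum>t=1..T. F t us)"
    by (rule sum_PiE_lag_offsets) (use vanish in blast)
  also have "\<dots> = (\<Sum>\<^sub>\<infinity>us\<in>{us. length us = K}. \<Sum>t=1..T. F t us)"
    by (rule sum_bounded_lists_eq_infsum) (auto intro!: sum.neutral vanish)
  also have "\<dots> = (\<Sum>\<^sub>\<infinity>us\<in>{us. length us = K}.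
        lag_weight M X fs us * lagged_fourier_moment lam T (sum_list fs) us)"
    by (intro infsum_cong)
      (simp add: F_def lag_weight_def lagged_fourier_moment_def h_def sum_distrib_left)
  finally show ?thesis .
qed

lemma cum_spectrum_take_eq_infsum:
  "complex_of_real ((2 * pi) ^ K) * cum_spectrum M X (Suc K) (take K fs)
    = (\<Sum>\<^sub>\<infinity>us\<in>{us. length us = K}. lag_weight M X fs us)"
proof -
  have "(2 * pi) ^ K * (2 * pi) powi (- int (Suc K) + 1) = (1::real)"
    by (simp add: power_int_minus field_simps)
  then have "complex_of_real ((2 * pi) ^ K) * cum_spectrum M X (Suc K) (take K fs)
      = (\<Sum>\<^sub>\<infinity>us\<in>{us. length us = K}. cumfun M X us
          * exp (- \<i> * complex_of_real (2 * pi * (\<Sum>j<K. real_of_int (us ! j) * take K fs ! j))))"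
    unfolding cum_spectrum_def by (simp flip: of_real_mult mult.assoc)
  also have "\<dots> = (\<Sum>\<^sub>\<infinity>us\<in>{us. length us = K}. lag_weight M X fs us)"
    by (intro infsum_cong) (simp add: lag_weight_def fourier_exp_def)
  finally show ?thesis .
qed

section \<open>Absolutely summable weights against an o(T) kernel\<close>

lemma summable_on_norm_mult_bounded:
  fixes a b :: "'u \<Rightarrow> 'b::real_normed_algebra"
  assumes "(\<lambda>u. norm (a u)) summable_on S" and "\<And>u. u \<in> S \<Longrightarrow> norm (b u) \<le> C"
  shows "(\<lambda>u. norm (a u * b u)) summable_on S"
proof (rule summable_on_comparison_test)
  show "(\<lambda>u. norm (a u) * C) summable_on S"
    using assms(1) by (rule summable_on_cmult_left)
  show "norm (a u * b u) \<le> norm (a u) * C" if "u \<in> S" for u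
    using assms(2)[OF that] norm_mult_ineq[of "a u" "b u"]
    by (meson mult_left_mono norm_ge_zero order_trans)
qed simp

lemma infsum_split_finite:
  fixes f :: "'u \<Rightarrow> 'b::{topological_comm_monoid_add, t2_space}"
  assumes "finite F" "F \<subseteq> S" "f summable_on (S - F)"
  shows "infsum f S = sum f F + infsum f (S - F)"
proof -
  have "infsum f (F \<union> (S - F)) = infsum f F + infsum f (S - F)"
    using assms by (intro infsum_Un_disjoint) auto
  with assms(1,2) show ?thesis
    by (simp add: Un_absorb1)
qed

lemma summable_on_small_tail:
  fixes w :: "'u \<Rightarrow> real"
  assumes "w summable_on S" and "\<epsilon> > 0"
  obtains F where "finite F" "F \<subseteq> S" "infsum w (S - F) < \<epsilon>"
proof -
  have "(sum w \<longlongrightarrow> infsum w S) (finite_subsets_at_top S)"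
    using assms(1) by (rule infsum_tendsto)
  then have "eventually (\<lambda>F. dist (sum w F) (infsum w S) < \<epsilon>) (finite_subsets_at_top S)"
    using assms(2) tendstoD by blast
  then obtain F where F: "finite F" "F \<subseteq> S" "dist (sum w F) (infsum w S) < \<epsilon>"
    unfolding eventually_finite_subsets_at_top by blast
  have "infsum w S = sum w F + infsum w (S - F)"
    using F(1,2) summable_on_subset[OF assms(1)] by (intro infsum_split_finite) auto
  with F show ?thesis
    by (intro that[of F]) (auto simp: dist_real_def)
qed

lemma norm_infsum_mult_le:
  fixes a b :: "'u \<Rightarrow> complex"
  assumes a: "(\<lambda>u. norm (a u)) summable_on S" and F: "finite F" "F \<subseteq> S"
    and b_le: "\<And>u. u \<in> S \<Longrightarrow> norm (b u) \<le> C"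
    and b_le_on_F: "\<And>u. u \<in> F \<Longrightarrow> norm (b u) \<le> B u"
  shows "norm (\<Sum>\<^sub>\<infinity>u\<in>S. a u * b u)
    \<le> (\<Sum>u\<in>F. norm (a u) * B u) + (\<Sum>\<^sub>\<infinity>u\<in>S - F. norm (a u)) * C"
proof -
  have summable: "(\<lambda>u. norm (a u * b u)) summable_on U" if "U \<subseteq> S" for U
    using summable_on_subset[OF a that] b_le that by (intro summable_on_norm_mult_bounded) auto
  have "(\<Sum>u\<in>F. norm (a u * b u)) \<le> (\<Sum>u\<in>F. norm (a u) * B u)"
    using b_le_on_F by (intro sum_mono) (auto simp: norm_mult intro!: mult_left_mono)
  moreover have "(\<Sum>\<^sub>\<infinity>u\<in>S - F. norm (a u * b u)) \<le> (\<Sum>\<^sub>\<infinity>u\<in>S - F. norm (a u) * C)"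
    using summable[of "S - F"] summable_on_subset[OF a, of "S - F"] b_le
    by (intro infsum_mono summable_on_cmult_left) (auto simp: norm_mult intro!: mult_left_mono)
  moreover have "norm (\<Sum>\<^sub>\<infinity>u\<in>S. a u * b u) \<le> (\<Sum>\<^sub>\<infinity>u\<in>S. norm (a u * b u))"
    by (intro norm_infsum_bound summable order_refl)
  moreover have "(\<Sum>\<^sub>\<infinity>u\<in>S. norm (a u * b u))
      = (\<Sum>u\<in>F. norm (a u * b u)) + (\<Sum>\<^sub>\<infinity>u\<in>S - F. norm (a u * b u))"
    using F summable[of "S - F"] by (intro infsum_split_finite) auto
  ultimately show ?thesis
    by (simp add: infsum_cmult_left')
qed

lemma infsum_mult_kernel_small_o:
  fixes a :: "'u \<Rightarrow> complex" and D :: "nat \<Rightarrow> 'u \<Rightarrow> complex" and B :: "'u \<Rightarrow> real"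
  assumes a: "(\<lambda>u. norm (a u)) summable_on S"
    and D_linear: "\<And>T u. T \<ge> 1 \<Longrightarrow> u \<in> S \<Longrightarrow> norm (D T u) \<le> C * real T"
    and D_bounded: "\<And>T u. T \<ge> 1 \<Longrightarrow> u \<in> S \<Longrightarrow> norm (D T u) \<le> B u"
  shows "(\<lambda>T. \<Sum>\<^sub>\<infinity>u\<in>S. a u * D T u) \<in> o(\<lambda>T. complex_of_nat T)"
proof (rule landau_o.smallI)
  \<comment> \<open>Off a finite set \<open>F\<close> carrying all but \<open>\<delta>\<close> of the weight the kernel is at most \<open>\<bar>C\<bar> T\<close>;
    on \<open>F\<close> it is bounded independently of \<open>T\<close>.\<close>
  fix \<epsilon> :: real assume \<epsilon>: "\<epsilon> > 0"
  define \<delta> where "\<delta> = \<epsilon> / (2 * (\<bar>C\<bar> + 1))"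
  have \<delta>: "\<delta> > 0" "\<delta> * \<bar>C\<bar> \<le> \<epsilon> / 2"
    using \<epsilon> by (simp_all add: \<delta>_def field_simps)
  obtain F where F: "finite F" "F \<subseteq> S" and tail: "(\<Sum>\<^sub>\<infinity>u\<in>S - F. norm (a u)) < \<delta>"
    using summable_on_small_tail[OF a \<delta>(1)] by blast
  define A where "A = (\<Sum>u\<in>F. norm (a u) * B u)"
  have "eventually (\<lambda>T. 2 * A / \<epsilon> \<le> real T) at_top"
    using filterlim_real_sequentially by (simp add: filterlim_at_top)
  with eventually_ge_at_top[of 1]
  show "eventually (\<lambda>T. norm (\<Sum>\<^sub>\<infinity>u\<in>S. a u * D T u) \<le> \<epsilon> * norm (complex_of_nat T)) at_top"
  proof eventually_elim
    case (elim T)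
    have "norm (\<Sum>\<^sub>\<infinity>u\<in>S. a u * D T u) \<le> A + (\<Sum>\<^sub>\<infinity>u\<in>S - F. norm (a u)) * (\<bar>C\<bar> * real T)"
      unfolding A_def using elim D_linear D_bounded F
      by (intro norm_infsum_mult_le[OF a F])
        (auto intro: order_trans[OF _ mult_right_mono[OF abs_ge_self]])
    moreover have "A \<le> \<epsilon> / 2 * real T"
      using elim \<epsilon> by (simp add: field_simps)
    moreover have "(\<Sum>\<^sub>\<infinity>u\<in>S - F. norm (a u)) * (\<bar>C\<bar> * real T) \<le> \<delta> * (\<bar>C\<bar> * real T)"
      using tail by (intro mult_right_mono) auto
    moreover have "\<delta> * (\<bar>C\<bar> * real T) \<le> \<epsilon> / 2 * real T"
      using mult_right_mono[OF \<delta>(2), of "real T"] by (simp add: mult.assoc)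
    ultimately show ?case
      by simp
  qed
qed

lemma lag_weight_taper_defect_small_o:
  assumes summable: "(\<lambda>us. norm (cumfun M X us)) summable_on {us. length us = K}"
    and lam: "\<And>s. 1 \<le> s \<Longrightarrow> 0 \<le> lam s \<and> lam s \<le> 1"
  shows "(\<lambda>T. \<Sum>\<^sub>\<infinity>us\<in>{us. length us = K}. lag_weight M X fs us
      * (lagged_fourier_moment lam T f us - fourier_moment lam T (Suc K) f)) \<in> o(\<lambda>T. complex_of_nat T)"
proof (rule infsum_mult_kernel_small_o)
  show "(\<lambda>us. norm (lag_weight M X fs us)) summable_on {us. length us = K}"
    using summable by simp
  show "norm (lagged_fourier_moment lam T f us - fourier_moment lam T (Suc K) f) \<le> 2 * real T"
    for T us
    by (rule norm_lagged_fourier_moment_diff_le_linear[where lam = lam, OF lam])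
  show "norm (lagged_fourier_moment lam T f us - fourier_moment lam T (Suc K) f)
      \<le> 2 * (\<Sum>j<K. real_of_int \<bar>us ! j\<bar>)"
    if "T \<ge> 1" and "us \<in> {us. length us = K}" for T us
    using norm_lagged_fourier_moment_diff_le[where lam = lam and f = f and us = us, OF lam that(1)]
      that(2)
    by simp
qed

lemma cum_tapered_ft_minus_main_term:
  assumes moments: "\<And>ts. integrable M (\<lambda>\<omega>. \<Prod>t\<leftarrow>ts. X t \<omega>)"
    and cum_stat: "\<And>(us::int list) (t::int). us \<noteq> [] \<Longrightarrow>
          cum M (map (\<lambda>u \<omega>. complex_of_real (X (t + u) \<omega>)) us)
        = cum M (map (\<lambda>u \<omega>. complex_of_real (X u \<omega>)) us)"
    and summable: "(\<lambda>us. norm (cumfun M X us)) summable_on {us. length us = K}"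
    and lam: "\<And>s. 1 \<le> s \<Longrightarrow> 0 \<le> lam s \<and> lam s \<le> 1"
    and T: "T \<ge> 1" and len: "length fs = Suc K"
  shows "cum M (map (\<lambda>f. tapered_ft lam X T f) fs)
      - complex_of_real ((2 * pi) ^ K) * fourier_moment lam T (Suc K) (sum_list fs)
        * cum_spectrum M X (Suc K) (take K fs)
    = (\<Sum>\<^sub>\<infinity>us\<in>{us. length us = K}. lag_weight M X fs us
        * (lagged_fourier_moment lam T (sum_list fs) us - fourier_moment lam T (Suc K) (sum_list fs)))"
proof -
  define S where "S = {us :: int list. length us = K}"
  define a where "a = lag_weight M X fs"
  define m where "m = fourier_moment lam T (Suc K) (sum_list fs)"
  define D where "D us = lagged_fourier_moment lam T (sum_list fs) us - m" for us
  have a_summable: "(\<lambda>us. norm (a us)) summable_on S"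
    using summable by (simp add: a_def S_def)
  have "(\<lambda>us. a us * D us) summable_on S"
    unfolding D_def m_def
    by (rule abs_summable_summable, rule summable_on_norm_mult_bounded[OF a_summable],
        rule norm_lagged_fourier_moment_diff_le_linear[where lam = lam, OF lam])
  moreover have "(\<lambda>us. a us * m) summable_on S"
    using abs_summable_summable[OF a_summable] by (rule summable_on_cmult_left)
  ultimately have split: "(\<Sum>\<^sub>\<infinity>us\<in>S. a us * D us + a us * m)
      = (\<Sum>\<^sub>\<infinity>us\<in>S. a us * D us) + (\<Sum>\<^sub>\<infinity>us\<in>S. a us) * m"
    by (simp only: infsum_add infsum_cmult_left')
  have recombine: "(\<Sum>\<^sub>\<infinity>us\<in>S. a us * D us + a us * m)
      = (\<Sum>\<^sub>\<infinity>us\<in>S. a us * lagged_fourier_moment lam T (sum_list fs) us)"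
    by (intro infsum_cong) (simp add: D_def algebra_simps)
  have lag_expansion: "cum M (map (\<lambda>f. tapered_ft lam X T f) fs)
      = (\<Sum>\<^sub>\<infinity>us\<in>S. a us * lagged_fourier_moment lam T (sum_list fs) us)"
    using cum_tapered_ft_lag_expansion[where M = M and X = X, OF moments cum_stat T len]
    by (simp add: a_def S_def)
  have main_term: "complex_of_real ((2 * pi) ^ K) * m * cum_spectrum M X (Suc K) (take K fs)
      = (\<Sum>\<^sub>\<infinity>us\<in>S. a us) * m"
    using cum_spectrum_take_eq_infsum[where K = K and M = M and X = X and fs = fs]
    by (simp add: a_def S_def mult_ac)
  have "cum M (map (\<lambda>f. tapered_ft lam X T f) fs)
      - complex_of_real ((2 * pi) ^ K) * m * cum_spectrum M X (Suc K) (take K fs)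
      = (\<Sum>\<^sub>\<infinity>us\<in>S. a us * D us)"
    unfolding lag_expansion main_term using split recombine by simp
  then show ?thesis
    by (simp add: S_def a_def D_def m_def)
qed

theorem proposition1:
  fixes M :: "'a measure" and X :: "int \<Rightarrow> 'a \<Rightarrow> real" and lam :: "nat \<Rightarrow> real"
    and k :: nat and fs :: "real list"
  assumes prob: "prob_space M"
    and meas: "\<And>t. X t \<in> borel_measurable M"
    and moments: "\<And>ts. integrable M (\<lambda>\<omega>. \<Prod>t\<leftarrow>ts. X t \<omega>)"
    and zero_mean: "\<And>t. integral\<^sup>L M (X t) = 0"
    and strict_stat: "\<And>(n::nat) (u::nat \<Rightarrow> int) (t::int).
          distr M (Pi\<^sub>M {..<n} (\<lambda>_. borel)) (\<lambda>\<omega>. \<lambda>i\<in>{..<n}. X (u i + t) \<omega>)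
        = distr M (Pi\<^sub>M {..<n} (\<lambda>_. borel)) (\<lambda>\<omega>. \<lambda>i\<in>{..<n}. X (u i) \<omega>)"
    and cum_stat: "\<And>(us::int list) (t::int). us \<noteq> [] \<Longrightarrow>
          cum M (map (\<lambda>u \<omega>. complex_of_real (X (t + u) \<omega>)) us)
        = cum M (map (\<lambda>u \<omega>. complex_of_real (X u \<omega>)) us)"
    and summ: "\<And>j::nat. j \<ge> 2 \<Longrightarrow> (\<lambda>us. norm (cumfun M X us)) summable_on {us. length us = j - 1}"
    and lam_range: "\<And>t. t \<ge> 1 \<Longrightarrow> 0 < lam t \<and> lam t \<le> 1"
    and k2: "k \<ge> 2"
    and len: "length fs = k"
  shows "(\<lambda>T. cum M (map (\<lambda>f. tapered_ft lam X T f) fs)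
            - complex_of_real ((2 * pi) ^ (k - 1)) * fourier_moment lam T k (sum_list fs)
              * cum_spectrum M X k (take (k - 1) fs))
         \<in> o(\<lambda>T. complex_of_nat T)"
proof -
  define K where "K = k - 1"
  have k: "k = Suc K"
    using k2 by (simp add: K_def)
  have lam: "\<And>s. 1 \<le> s \<Longrightarrow> 0 \<le> lam s \<and> lam s \<le> 1"
    using lam_range by fastforce
  have summable: "(\<lambda>us. norm (cumfun M X us)) summable_on {us. length us = K}"
    using summ[OF k2] by (simp add: K_def)
  let ?defect = "\<lambda>T. \<Sum>\<^sub>\<infinity>us\<in>{us. length us = K}. lag_weight M X fs us
      * (lagged_fourier_moment lam T (sum_list fs) us - fourier_moment lam T k (sum_list fs))"
  have "eventually (\<lambda>T. cum M (map (\<lambda>f. tapered_ft lam X T f) fs)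
        - complex_of_real ((2 * pi) ^ (k - 1)) * fourier_moment lam T k (sum_list fs)
          * cum_spectrum M X k (take (k - 1) fs) = ?defect T) at_top"
    using eventually_ge_at_top[of 1]
  proof eventually_elim
    case (elim T)
    show ?case
      using cum_tapered_ft_minus_main_term[where M = M and X = X and lam = lam,
          OF moments cum_stat summable lam elim len[unfolded k]]
      by (simp add: k)
  qed
  moreover have "?defect \<in> o(\<lambda>T. complex_of_nat T)"
    unfolding k by (rule lag_weight_taper_defect_small_o[where lam = lam, OF summable lam])
  ultimately show ?thesis
    by (subst landau_o.small.in_cong)
qed

end
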